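(* In the multivariate LISO setting with $\sum_iY_i=0$ and, for each $k$, distinct values $X^{(k)}_1,\dots,X^{(k)}_n$, let $\pi^{(k)}$ be the permutation with $X^{(k)}_{\pi^{(k)}(1)}<\dots<X^{(k)}_{\pi^{(k)}(n)}$. If $$\lambda\ge\max_{1\le k\le p,\ 1\le m\le n}\Big|\sum_{i=1}^m Y_{\pi^{(k)}(i)}\Big|,$$ then the zero fit $(\theta_1,\dots,\theta_p)=(0,\dots,0)$ is a minimiser of $L_\lambda$, and every single-covariate update of the LISO-backfitting procedure started at zero leaves the fit at zero.
   Context: Data $Y\in\mathbb{R}^n$ with $\sum_iY_i=0$, $X\in\mathbb{R}^{n\times p}$ with columns $X^{(k)}$. $\mathcal{F}_k$ is the set of $\theta_k\in\mathbb{R}^n$ with $\sum_i\theta_{k,i}=0$ and $\theta_{k,i}\le\theta_{k,j}$ whenever $X^{(k)}_i<X^{(k)}_j$. The LISO loss is $L_\lambda(\theta_1,\dots,\theta_p)=\tfrac12\|Y-\sum_k\theta_k\|^2+\lambda\sum_k(\max_i\theta_{k,i}-\min_i\theta_{k,i})$ over $\mathcal{F}_1\times\dots\times\mathcal{F}_p$. A single-covariate backfitting update replaces $\theta_k$ by the minimiser of $L_\lambda$ over $\theta_k\in\mathcal{F}_k$ with the other components fixed. *)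

theory Defs
  imports Complex_Main
begin

text \<open>Observations are indexed by i < n (0-based), covariates by k < p.
  A fit is theta :: nat => nat => real with theta k i = theta_{k,i}.
  X k i = X^{(k)}_i.\<close>

definition liso_F :: "nat \<Rightarrow> (nat \<Rightarrow> nat \<Rightarrow> real) \<Rightarrow> nat \<Rightarrow> (nat \<Rightarrow> real) set" where
  "liso_F n X k = {th. (\<Sum>i<n. th i) = 0 \<and>
      (\<forall>i<n. \<forall>j<n. X k i < X k j \<longrightarrow> th i \<le> th j)}"

definition liso_loss :: "nat \<Rightarrow> nat \<Rightarrow> (nat \<Rightarrow> real) \<Rightarrow> real \<Rightarrow> (nat \<Rightarrow> nat \<Rightarrow> real) \<Rightarrow> real" where
  "liso_loss n p Y lam theta =
     (1/2) * (\<Sum>i<n. (Y i - (\<Sum>k<p. theta k i))\<^sup>2)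
     + lam * (\<Sum>k<p. Max (theta k ` {..<n}) - Min (theta k ` {..<n}))"

definition liso_minimiser :: "nat \<Rightarrow> nat \<Rightarrow> (nat \<Rightarrow> real) \<Rightarrow> (nat \<Rightarrow> nat \<Rightarrow> real) \<Rightarrow> real \<Rightarrow> (nat \<Rightarrow> nat \<Rightarrow> real) \<Rightarrow> bool" where
  "liso_minimiser n p Y X lam theta \<longleftrightarrow>
     (\<forall>k<p. theta k \<in> liso_F n X k) \<and>
     (\<forall>theta'. (\<forall>k<p. theta' k \<in> liso_F n X k) \<longrightarrow>
        liso_loss n p Y lam theta \<le> liso_loss n p Y lam theta')"

definition liso_update :: "nat \<Rightarrow> nat \<Rightarrow> (nat \<Rightarrow> real) \<Rightarrow> (nat \<Rightarrow> nat \<Rightarrow> real) \<Rightarrow> real \<Rightarrow> (nat \<Rightarrow> nat \<Rightarrow> real) \<Rightarrow> nat \<Rightarrow> (nat \<Rightarrow> real) \<Rightarrow> bool" where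
  "liso_update n p Y X lam theta k th \<longleftrightarrow>
     th \<in> liso_F n X k \<and>
     (\<forall>th' \<in> liso_F n X k.
        liso_loss n p Y lam (theta(k := th)) \<le> liso_loss n p Y lam (theta(k := th')))"

end

theory Submission
  imports Defs
begin

text \<open>
  Write t = \<Sum>_k theta_k for the total fit.  Expanding the square gives the
  identity  L(theta) = L(0) + (lam * \<Sum>_k range(theta_k) - <Y, t>) + |t|^2 / 2.
  The bound on lam makes the bracket nonnegative: for a single covariate k and any
  theta_k in F_k, summation by parts along the sorting permutation pi_k rewrites
  <Y, theta_k> as minus the sum of partial sums of Y (each bounded by lam) times the
  nonnegative increments of theta_k, so <Y, theta_k> \<le> lam * range(theta_k).
  Hence L(theta) \<ge> L(0) + |t|^2 / 2 for every feasible fit.  This shows that 0 is a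
  minimiser, and a backfitting update th of component k from 0 (a fit whose total is th)
  satisfies L(0) \<ge> L(0) + |th|^2 / 2, forcing th = 0.
  The file proves summation by parts, the single-covariate correlation bound, the
  loss identity and the resulting lower bound, and then the theorem.
\<close>

abbreviation spread :: "nat \<Rightarrow> (nat \<Rightarrow> real) \<Rightarrow> real" where
  "spread n th \<equiv> Max (th ` {..<n}) - Min (th ` {..<n})"

abbreviation fit_total :: "nat \<Rightarrow> (nat \<Rightarrow> nat \<Rightarrow> real) \<Rightarrow> nat \<Rightarrow> real" where
  "fit_total p theta i \<equiv> \<Sum>k<p. theta k i"

lemma summation_by_parts:
  fixes y a :: "nat \<Rightarrow> real"
  shows "(\<Sum>m<Suc N. y m * a m) = (\<Sum>i<Suc N. y i) * a N
           - (\<Sum>m<N. (\<Sum>i<Suc m. y i) * (a (Suc m) - a m))"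
proof (induction N)
  case 0
  then show ?case by simp
next
  case (Suc N)
  have "(\<Sum>m<Suc (Suc N). y m * a m) = (\<Sum>m<Suc N. y m * a m) + y (Suc N) * a (Suc N)"
    by simp
  then show ?case
    unfolding Suc by (simp add: algebra_simps)
qed

lemma centred_correlation_le:
  fixes y a :: "nat \<Rightarrow> real"
  assumes "0 < n" and centred: "(\<Sum>i<n. y i) = 0"
    and partial: "\<forall>m\<in>{1..n}. \<bar>\<Sum>i<m. y i\<bar> \<le> lam"
    and mono: "\<forall>m. Suc m < n \<longrightarrow> a m \<le> a (Suc m)"
  shows "(\<Sum>m<n. y m * a m) \<le> lam * (a (n - 1) - a 0)"
proof -
  obtain N where N: "n = Suc N" using \<open>0 < n\<close> by (cases n) auto
  have term_le: "- ((\<Sum>i<Suc m. y i) * (a (Suc m) - a m)) \<le> lam * (a (Suc m) - a m)"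
    if "m < N" for m
  proof -
    have incr: "0 \<le> a (Suc m) - a m" using mono N that by auto
    have "\<bar>\<Sum>i<Suc m. y i\<bar> \<le> lam"
      using partial N that by (simp del: sum.lessThan_Suc)
    then have "- (\<Sum>i<Suc m. y i) \<le> lam" by linarith
    from mult_right_mono[OF this incr] show ?thesis by (simp only: mult_minus_left)
  qed
  have "(\<Sum>m<n. y m * a m) = - (\<Sum>m<N. (\<Sum>i<Suc m. y i) * (a (Suc m) - a m))"
    using summation_by_parts[of y a N] centred N by simp
  also have "\<dots> = (\<Sum>m<N. - ((\<Sum>i<Suc m. y i) * (a (Suc m) - a m)))"
    by (simp only: sum_negf)
  also have "\<dots> \<le> (\<Sum>m<N. lam * (a (Suc m) - a m))"
    using term_le by (intro sum_mono) auto
  also have "\<dots> = lam * (a (n - 1) - a 0)"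
    by (simp add: N sum_distrib_left[symmetric] sum_lessThan_telescope)
  finally show ?thesis .
qed

lemma correlation_le_spread:
  fixes y th :: "nat \<Rightarrow> real" and sigma :: "nat \<Rightarrow> nat"
  assumes "0 < n" and perm: "bij_betw sigma {..<n} {..<n}"
    and centred: "(\<Sum>i<n. y i) = 0"
    and partial: "\<forall>m\<in>{1..n}. \<bar>\<Sum>i<m. y (sigma i)\<bar> \<le> lam"
    and mono: "\<forall>m. Suc m < n \<longrightarrow> th (sigma m) \<le> th (sigma (Suc m))"
  shows "(\<Sum>i<n. y i * th i) \<le> lam * spread n th"
proof -
  have "(1::nat) \<in> {1..n}" using \<open>0 < n\<close> by simp
  then have "\<bar>\<Sum>i<1. y (sigma i)\<bar> \<le> lam"
    using partial by blast
  then have lam_nonneg: "0 \<le> lam"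
    by (rule order.trans[OF abs_ge_zero])
  have ends: "sigma (n - 1) < n" "sigma 0 < n"
    using perm \<open>0 < n\<close> by (auto simp: bij_betw_def)
  have "(\<Sum>i<n. y i * th i) = (\<Sum>m<n. y (sigma m) * th (sigma m))"
    using sum.reindex_bij_betw[OF perm, of "\<lambda>i. y i * th i"] by simp
  also have "\<dots> \<le> lam * (th (sigma (n - 1)) - th (sigma 0))"
  proof (rule centred_correlation_le[OF \<open>0 < n\<close> _ partial mono])
    show "(\<Sum>i<n. y (sigma i)) = 0"
      using sum.reindex_bij_betw[OF perm, of y] centred by simp
  qed
  also have "\<dots> \<le> lam * spread n th"
    using ends lam_nonneg by (intro mult_left_mono diff_mono) auto
  finally show ?thesis .
qed

lemma liso_F_mono_along_sort:
  assumes th: "th \<in> liso_F n X k" and perm: "bij_betw sigma {..<n} {..<n}"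
    and sorts: "\<forall>i j. i < j \<and> j < n \<longrightarrow> X k (sigma i) < X k (sigma j)"
  shows "\<forall>m. Suc m < n \<longrightarrow> th (sigma m) \<le> th (sigma (Suc m))"
proof (intro allI impI)
  fix m assume m: "Suc m < n"
  have "sigma m < n" "sigma (Suc m) < n" using perm m by (auto simp: bij_betw_def)
  moreover have "X k (sigma m) < X k (sigma (Suc m))" using sorts m by auto
  moreover have "\<forall>i<n. \<forall>j<n. X k i < X k j \<longrightarrow> th i \<le> th j"
    using th by (simp add: liso_F_def)
  ultimately show "th (sigma m) \<le> th (sigma (Suc m))" by blast
qed

lemma liso_F_correlation_le_spread:
  assumes "0 < n" and centred: "(\<Sum>i<n. Y i) = 0"
    and perm: "bij_betw sigma {..<n} {..<n}"
    and sorts: "\<forall>i j. i < j \<and> j < n \<longrightarrow> X k (sigma i) < X k (sigma j)"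
    and partial: "\<forall>m\<in>{1..n}. \<bar>\<Sum>i<m. Y (sigma i)\<bar> \<le> lam"
    and th: "th \<in> liso_F n X k"
  shows "(\<Sum>i<n. Y i * th i) \<le> lam * spread n th"
  using correlation_le_spread[OF \<open>0 < n\<close> perm centred partial
      liso_F_mono_along_sort[OF th perm sorts]] .

lemma liso_loss_expand:
  assumes "0 < n"
  shows "liso_loss n p Y lam theta = liso_loss n p Y lam (\<lambda>k i. 0)
      + (lam * (\<Sum>k<p. spread n (theta k)) - (\<Sum>i<n. Y i * fit_total p theta i))
      + (1/2) * (\<Sum>i<n. (fit_total p theta i)\<^sup>2)"
proof -
  have zero_image: "(\<lambda>i. 0::real) ` {..<n} = {0}" using \<open>0 < n\<close> by auto
  have square_sum: "(\<Sum>i<n. (Y i - t i)\<^sup>2)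
      = (\<Sum>i<n. (Y i)\<^sup>2) - 2 * (\<Sum>i<n. Y i * t i) + (\<Sum>i<n. (t i)\<^sup>2)" for t :: "nat \<Rightarrow> real"
    by (simp add: power2_diff sum.distrib sum_subtractf sum_distrib_left algebra_simps)
  show ?thesis
    unfolding liso_loss_def square_sum by (simp add: zero_image algebra_simps)
qed

lemma liso_loss_lower_bound:
  assumes "0 < n"
    and dominates: "\<forall>k<p. \<forall>th\<in>liso_F n X k. (\<Sum>i<n. Y i * th i) \<le> lam * spread n th"
    and feasible: "\<forall>k<p. theta k \<in> liso_F n X k"
  shows "liso_loss n p Y lam (\<lambda>k i. 0) + (1/2) * (\<Sum>i<n. (fit_total p theta i)\<^sup>2)
           \<le> liso_loss n p Y lam theta"
proof -
  have "(\<Sum>i<n. Y i * fit_total p theta i) = (\<Sum>k<p. \<Sum>i<n. Y i * theta k i)"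
    by (simp add: sum_distrib_left sum.swap[of _ "{..<n}"])
  also have "\<dots> \<le> (\<Sum>k<p. lam * spread n (theta k))"
    using dominates feasible by (intro sum_mono) auto
  finally have "(\<Sum>i<n. Y i * fit_total p theta i) \<le> lam * (\<Sum>k<p. spread n (theta k))"
    by (simp add: sum_distrib_left)
  then show ?thesis using liso_loss_expand[OF \<open>0 < n\<close>, of p Y lam theta] by linarith
qed

lemma fit_total_single:
  assumes "k < p"
  shows "fit_total p ((\<lambda>k i. 0)(k := th)) i = th i"
proof -
  have "fit_total p ((\<lambda>k i. 0)(k := th)) i = (\<Sum>k'<p. if k' = k then th i else 0)"
    by (rule sum.cong) auto
  then show ?thesis using assms by simp
qed

theorem mainTheorem8:
  fixes n p :: nat and Y :: "nat \<Rightarrow> real" and X :: "nat \<Rightarrow> nat \<Rightarrow> real"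
    and lam :: real and pi :: "nat \<Rightarrow> nat \<Rightarrow> nat"
  assumes n_pos: "0 < n"
    and Y_centred: "(\<Sum>i<n. Y i) = 0"
    and X_distinct: "\<forall>k<p. inj_on (X k) {..<n}"
    and pi_perm: "\<forall>k<p. bij_betw (pi k) {..<n} {..<n}"
    and pi_sorts: "\<forall>k<p. \<forall>i j. i < j \<and> j < n \<longrightarrow> X k (pi k i) < X k (pi k j)"
    and lam_ge: "\<forall>k<p. \<forall>m\<in>{1..n}. \<bar>\<Sum>i<m. Y (pi k i)\<bar> \<le> lam"
  shows "liso_minimiser n p Y X lam (\<lambda>k i. 0) \<and>
         (\<forall>k<p. \<forall>th. liso_update n p Y X lam (\<lambda>k i. 0) k th \<longrightarrow> (\<forall>i<n. th i = 0))"
proof -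
  have dominates: "\<forall>k<p. \<forall>th\<in>liso_F n X k. (\<Sum>i<n. Y i * th i) \<le> lam * spread n th"
    using liso_F_correlation_le_spread[OF n_pos Y_centred] pi_perm pi_sorts lam_ge by blast
  have zero_feasible: "(\<lambda>i. 0) \<in> liso_F n X k" for k by (simp add: liso_F_def)
  note lower = liso_loss_lower_bound[OF n_pos dominates]
  have "liso_minimiser n p Y X lam (\<lambda>k i. 0)"
    unfolding liso_minimiser_def
  proof (intro conjI allI impI)
    fix theta assume "\<forall>k<p. theta k \<in> liso_F n X k"
    from lower[OF this] show "liso_loss n p Y lam (\<lambda>k i. 0) \<le> liso_loss n p Y lam theta"
      using sum_nonneg[of "{..<n}" "\<lambda>i. (fit_total p theta i)\<^sup>2"] by simp
  qed (rule zero_feasible)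
  moreover have "\<forall>i<n. th i = 0"
    if k: "k < p" and update: "liso_update n p Y X lam (\<lambda>k i. 0) k th" for k th
  proof -
    have thF: "th \<in> liso_F n X k" and optimal:
      "liso_loss n p Y lam ((\<lambda>k i. 0)(k := th)) \<le> liso_loss n p Y lam (\<lambda>k i. 0)"
      using update zero_feasible[of k] unfolding liso_update_def by (auto simp: fun_upd_idem)
    have "\<forall>k'<p. ((\<lambda>k i. 0)(k := th)) k' \<in> liso_F n X k'"
      using thF zero_feasible by simp
    from lower[OF this] optimal
    have "liso_loss n p Y lam (\<lambda>k i. 0) + (1/2) * (\<Sum>i<n. (th i)\<^sup>2)
                 \<le> liso_loss n p Y lam (\<lambda>k i. 0)"
      unfolding fit_total_single[OF k] by linarith
    then have "(\<Sum>i<n. (th i)\<^sup>2) = 0"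
      using sum_nonneg[of "{..<n}" "\<lambda>i. (th i)\<^sup>2"] by simp
    then show ?thesis by (simp add: sum_nonneg_eq_0_iff)
  qed
  ultimately show ?thesis by blast
qed

end
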